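(* The relation $\{(\rho,\sigma,\pi):\rho,\sigma,\pi\text{ are total and }|\rho|+|\sigma|=|\pi|\}$ is $\Pi_3$-definable in $\mathbf Y^*=\langle\mathcal P,\le,[1]+[1]\rangle$.
   Context: $\mathcal P$ is the set of all integer partitions, including the empty partition $\emptyset$; a partition is a nonincreasing finite sequence of positive integers (its parts), and $|\pi|$ is the sum of its parts. A partition is total if it has exactly one part; $\emptyset$ also counts as total. Young's lattice $\mathbf Y=\langle\mathcal P,\le\rangle$ has $(s_1,\dots,s_r)\le(n_1,\dots,n_t)$ iff $r\le t$ and $s_i\le n_i$ for all $i\le r$; $\mathbf Y^*$ is $\mathbf Y$ with a constant symbol for the partition $(1,1)$. A relation is $\Pi_n$-definable if it is defined by a first-order formula in the language $\{\le,(1,1)\}$ in prenex form with $n$ alternating quantifier blocks, the outermost universal, and a quantifier-free matrix. *)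

theory Defs
  imports Main
begin

definition is_partition :: "nat list \<Rightarrow> bool" where
  "is_partition xs \<longleftrightarrow> sorted_wrt (\<ge>) xs \<and> (\<forall>x\<in>set xs. 0 < x)"

definition psize :: "nat list \<Rightarrow> nat" where
  "psize xs = sum_list xs"

definition total_part :: "nat list \<Rightarrow> bool" where
  "total_part xs \<longleftrightarrow> length xs \<le> 1"

definition young_le :: "nat list \<Rightarrow> nat list \<Rightarrow> bool" where
  "young_le s n \<longleftrightarrow> length s \<le> length n \<and> (\<forall>i<length s. s ! i \<le> n ! i)"

datatype tm = Var nat | C11

datatype fm =
    Le tm tm
  | Eq tm tm
  | Neg fm
  | Conj fm fm
  | Disj fm fm
  | Ex nat fm
  | All nat fm

fun eval_tm :: "(nat \<Rightarrow> nat list) \<Rightarrow> tm \<Rightarrow> nat list" where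
  "eval_tm e (Var i) = e i"
| "eval_tm e C11 = [1, 1]"

fun sat :: "(nat \<Rightarrow> nat list) \<Rightarrow> fm \<Rightarrow> bool" where
  "sat e (Le a b) = young_le (eval_tm e a) (eval_tm e b)"
| "sat e (Eq a b) = (eval_tm e a = eval_tm e b)"
| "sat e (Neg f) = (\<not> sat e f)"
| "sat e (Conj f g) = (sat e f \<and> sat e g)"
| "sat e (Disj f g) = (sat e f \<or> sat e g)"
| "sat e (Ex x f) = (\<exists>p. is_partition p \<and> sat (e(x := p)) f)"
| "sat e (All x f) = (\<forall>p. is_partition p \<longrightarrow> sat (e(x := p)) f)"

fun qfree :: "fm \<Rightarrow> bool" where
  "qfree (Le a b) = True"
| "qfree (Eq a b) = True"
| "qfree (Neg f) = qfree f"
| "qfree (Conj f g) = (qfree f \<and> qfree g)"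
| "qfree (Disj f g) = (qfree f \<and> qfree g)"
| "qfree (Ex x f) = False"
| "qfree (All x f) = False"

definition Alls :: "nat list \<Rightarrow> fm \<Rightarrow> fm" where
  "Alls xs f = foldr All xs f"

definition Exs :: "nat list \<Rightarrow> fm \<Rightarrow> fm" where
  "Exs xs f = foldr Ex xs f"

inductive pi_fm :: "nat \<Rightarrow> fm \<Rightarrow> bool" and sigma_fm :: "nat \<Rightarrow> fm \<Rightarrow> bool" where
  pi0: "qfree f \<Longrightarrow> pi_fm 0 f"
| sigma0: "qfree f \<Longrightarrow> sigma_fm 0 f"
| piS: "sigma_fm n f \<Longrightarrow> pi_fm (Suc n) (Alls xs f)"
| sigmaS: "pi_fm n f \<Longrightarrow> sigma_fm (Suc n) (Exs xs f)"

definition pi_definable3 :: "nat \<Rightarrow> (nat list \<Rightarrow> nat list \<Rightarrow> nat list \<Rightarrow> bool) \<Rightarrow> bool" where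
  "pi_definable3 n R \<longleftrightarrow>
     (\<exists>f. pi_fm n f \<and>
        (\<forall>e. (\<forall>i. is_partition (e i)) \<longrightarrow> (sat e f \<longleftrightarrow> R (e 0) (e 1) (e 2))))"

end

theory Submission
  imports Defs
begin

text \<open>
  For total \<open>\<rho> = (a)\<close>, \<open>\<sigma> = (b)\<close>, \<open>\<pi> = (c)\<close>, the rectangle with \<open>b + 1\<close> rows of
  length \<open>a + 1\<close> lies below the staircase \<open>(c + 1, c, \<dots>, 1)\<close> but not below \<open>(c, \<dots>, 1)\<close>
  exactly when \<open>a + b = c\<close>. All partitions involved are pinned down by \<open>\<Pi>\<^sub>2\<close> conditions in
  \<open>\<rho>, \<sigma>, \<pi>\<close>: \<open>(2)\<close> is the least total partition not below \<open>(1, 1)\<close> and \<open>(k + 1)\<close> the least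
  total partition above \<open>(k)\<close>; staircases are the partitions \<open>S\<close> such that no interval
  \<open>[u, S]\<close> is a three-element chain (such an interval means that \<open>S / u\<close> is a removable
  domino), their height being read off from the total partitions below them; and the rectangle
  is the largest partition whose total subpartitions lie below \<open>(a + 1)\<close> and whose columns,
  the partitions not above \<open>(2)\<close>, lie below the staircase of height \<open>b + 1\<close>. Quantifying
  universally over these parameters in front of the resulting \<open>\<Sigma>\<^sub>2\<close> condition gives a
  \<open>\<Pi>\<^sub>3\<close> definition.
\<close>

section \<open>Rows of a partition\<close>

abbreviation partitions :: "nat list set" where
  "partitions \<equiv> {x. is_partition x}"

definition row :: "nat list \<Rightarrow> nat \<Rightarrow> nat" where
  "row x i = (if i < length x then x ! i else 0)"

lemma row_eq_0: "length x \<le> i \<Longrightarrow> row x i = 0"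
  by (simp add: row_def)

lemma row_Cons_0: "row (a # x) 0 = a"
  by (simp add: row_def)

lemma nth_pos: "is_partition x \<Longrightarrow> i < length x \<Longrightarrow> 0 < x ! i"
  by (simp add: is_partition_def)

lemma row_pos_iff: "is_partition x \<Longrightarrow> 0 < row x i \<longleftrightarrow> i < length x"
  by (auto simp: row_def is_partition_def)

lemma antimono_row: "is_partition x \<Longrightarrow> antimono (row x)"
proof (rule antimonoI)
  fix i j :: nat
  assume "is_partition x" "i \<le> j"
  then show "row x j \<le> row x i"
    by (cases "i = j") (auto simp: row_def is_partition_def sorted_wrt_iff_nth_less)
qed

lemma young_le_iff_row_le:
  assumes "is_partition x"
  shows "young_le x y \<longleftrightarrow> row x \<le> row y"
proof
  assume "young_le x y"
  then show "row x \<le> row y"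
    by (auto simp: le_fun_def young_le_def row_def)
next
  assume le: "row x \<le> row y"
  have "length x \<le> length y"
    using le_funD[OF le, of "length y"] row_pos_iff[OF assms, of "length y"]
    by (simp add: row_eq_0)
  with le show "young_le x y"
    by (auto simp: young_le_def le_fun_def row_def split: if_splits dest!: spec)
qed

lemma partition_eqI:
  assumes "is_partition x" "is_partition y" "row x = row y"
  shows "x = y"
proof -
  have "young_le x y" "young_le y x"
    using assms by (simp_all add: young_le_iff_row_le)
  then have "length x = length y"
    by (simp add: young_le_def)
  with assms(3) show ?thesis
    by (metis row_def nth_equalityI)
qed

definition of_rows :: "(nat \<Rightarrow> nat) \<Rightarrow> nat list" where
  "of_rows g = map g [0..<(LEAST i. g i = 0)]"

lemma
  assumes "antimono g" "g N = 0"
  shows is_partition_of_rows: "is_partition (of_rows g)"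
    and row_of_rows: "row (of_rows g) = g"
proof -
  define L where "L = (LEAST i. g i = 0)"
  have "g L = 0"
    unfolding L_def by (rule LeastI[of _ N]) (rule assms(2))
  then have "g i = 0" if "L \<le> i" for i
    using assms(1) that by (metis antimonoD le_zero_eq)
  moreover have "0 < g i" if "i < L" for i
    using that not_less_Least unfolding L_def by blast
  ultimately show "is_partition (of_rows g)" "row (of_rows g) = g"
    using assms(1) unfolding of_rows_def L_def[symmetric]
    by (auto simp: is_partition_def sorted_wrt_iff_nth_less row_def fun_eq_iff antimonoD)
qed

lemma partition_with_rows:
  assumes "antimono h" "h \<le> row S"
  obtains w where "is_partition w" "row w = h"
proof -
  have "h (length S) = 0"
    using le_funD[OF assms(2), of "length S"] by (simp add: row_eq_0)
  then show thesis
    using that is_partition_of_rows[OF assms(1)] row_of_rows[OF assms(1)] by blast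
qed

lemma young_le_refl: "young_le x x"
  by (simp add: young_le_def)

lemma young_le_antisym:
  "is_partition x \<Longrightarrow> is_partition y \<Longrightarrow> young_le x y \<Longrightarrow> young_le y x \<Longrightarrow> x = y"
  by (simp add: partition_eqI young_le_iff_row_le)

definition young_less :: "nat list \<Rightarrow> nat list \<Rightarrow> bool" where
  "young_less x y \<longleftrightarrow> young_le x y \<and> x \<noteq> y"

lemma young_less_iff_row_less:
  assumes "is_partition x" "is_partition y"
  shows "young_less x y \<longleftrightarrow> row x < row y"
  using assms partition_eqI[OF assms] young_le_iff_row_le
  by (auto simp: young_less_def less_le)

section \<open>Total partitions\<close>

definition total :: "nat \<Rightarrow> nat list" where
  "total k = (if k = 0 then [] else [k])"

lemma is_partition_total: "is_partition (total k)"
  by (simp add: total_def is_partition_def)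

lemma total_inject: "total a = total b \<longleftrightarrow> a = b"
  by (simp add: total_def)

lemma total_le_iff: "young_le (total k) y \<longleftrightarrow> k \<le> row y 0"
  by (cases y) (auto simp: young_le_def total_def row_def)

lemma row_total_0: "row (total k) 0 = k"
  by (simp add: total_def row_def)

lemma total_le_total: "young_le (total a) (total b) \<longleftrightarrow> a \<le> b"
  by (simp add: total_le_iff row_total_0)

lemma total_less_total: "young_less (total a) (total b) \<longleftrightarrow> a < b"
  by (auto simp: young_less_def total_le_total total_inject)

lemma psize_total: "psize (total k) = k"
  by (simp add: psize_def total_def)

lemma total_part_iff:
  assumes "is_partition x"
  shows "total_part x \<longleftrightarrow> (\<exists>k. x = total k)"
  using assms by (cases x) (auto simp: total_part_def total_def is_partition_def)

definition is_total :: "nat list \<Rightarrow> bool" where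
  "is_total x \<longleftrightarrow> \<not> young_le [1, 1] x"

lemma is_total_iff_total_part:
  assumes "is_partition x"
  shows "is_total x \<longleftrightarrow> total_part x"
proof -
  have "young_le [1, 1] x \<longleftrightarrow> 2 \<le> length x"
    using nth_pos[OF assms, of 0] nth_pos[OF assms, of 1] unfolding young_le_def
    by (auto simp: less_Suc_eq nth_Cons' Suc_le_eq) fastforce
  then show ?thesis
    by (auto simp: is_total_def total_part_def)
qed

lemma is_total_iff:
  assumes "is_partition x"
  shows "is_total x \<longleftrightarrow> (\<exists>k. x = total k)"
  using assms by (simp add: is_total_iff_total_part total_part_iff)

lemma ball_is_total: "(\<forall>s\<in>partitions. is_total s \<longrightarrow> P s) \<longleftrightarrow> (\<forall>k. P (total k))"
  using is_total_iff is_partition_total by auto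

definition two_test :: "nat list \<Rightarrow> nat list \<Rightarrow> bool" where
  "two_test T s \<longleftrightarrow> is_total T \<and> \<not> young_le T [1, 1]
     \<and> (is_total s \<and> \<not> young_le s [1, 1] \<longrightarrow> young_le T s)"

lemma all_two_test_iff:
  assumes "is_partition T"
  shows "(\<forall>s\<in>partitions. two_test T s) \<longleftrightarrow> T = total 2"
proof -
  have "(\<forall>s\<in>partitions. two_test T s) \<longleftrightarrow> is_total T \<and> \<not> young_le T [1, 1] \<and>
      (\<forall>s\<in>partitions. is_total s \<longrightarrow> \<not> young_le s [1, 1] \<longrightarrow> young_le T s)"
    unfolding two_test_def using is_partition_total by blast
  also have "\<dots> \<longleftrightarrow>
      is_total T \<and> \<not> young_le T [1, 1] \<and> (\<forall>k. 1 < k \<longrightarrow> young_le T (total k))"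
    by (simp only: ball_is_total) (simp add: total_le_iff row_total_0 row_Cons_0 not_le)
  also have "\<dots> \<longleftrightarrow> (\<exists>m. T = total m \<and> 1 < m \<and> (\<forall>k. 1 < k \<longrightarrow> m \<le> k))"
    using is_total_iff[OF assms] by (auto simp: total_le_iff row_total_0 row_Cons_0)
  also have "\<dots> \<longleftrightarrow> T = total 2"
  proof
    assume "\<exists>m. T = total m \<and> 1 < m \<and> (\<forall>k. 1 < k \<longrightarrow> m \<le> k)"
    then obtain m where "T = total m" "1 < m" "m \<le> 2"
      by auto
    then show "T = total 2"
      by (simp add: total_inject)
  qed auto
  finally show ?thesis .
qed

definition succ_test :: "nat list \<Rightarrow> nat list \<Rightarrow> nat list \<Rightarrow> bool" where
  "succ_test r A s \<longleftrightarrow> is_total A \<and> young_less r A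
     \<and> (is_total s \<and> young_less r s \<longrightarrow> young_le A s)"

lemma all_succ_test_iff:
  assumes "is_partition A"
  shows "(\<forall>s\<in>partitions. succ_test (total a) A s) \<longleftrightarrow> A = total (Suc a)"
proof -
  have "(\<forall>s\<in>partitions. succ_test (total a) A s) \<longleftrightarrow> is_total A \<and> young_less (total a) A \<and>
      (\<forall>s\<in>partitions. is_total s \<longrightarrow> young_less (total a) s \<longrightarrow> young_le A s)"
    unfolding succ_test_def using is_partition_total by blast
  also have "\<dots> \<longleftrightarrow> (\<exists>m. A = total m \<and> a < m \<and> (\<forall>k. a < k \<longrightarrow> m \<le> k))"
    using is_total_iff[OF assms]
    by (simp only: ball_is_total) (auto simp: total_less_total total_le_total)
  also have "\<dots> \<longleftrightarrow> A = total (Suc a)"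
  proof
    assume "\<exists>m. A = total m \<and> a < m \<and> (\<forall>k. a < k \<longrightarrow> m \<le> k)"
    then obtain m where "A = total m" "a < m" "m \<le> Suc a"
      by auto
    then show "A = total (Suc a)"
      by (simp add: total_inject)
  qed auto
  finally show ?thesis .
qed

lemma first_row_eq_iff:
  assumes "is_partition S"
  shows "(young_le (total b) S \<and> (\<forall>s\<in>partitions. is_total s \<longrightarrow> young_le s S \<longrightarrow> young_le s (total b)))
    \<longleftrightarrow> row S 0 = b"
proof -
  have "(\<forall>s\<in>partitions. is_total s \<longrightarrow> young_le s S \<longrightarrow> young_le s (total b)) \<longleftrightarrow> row S 0 \<le> b"
    by (simp only: ball_is_total) (auto simp: total_le_iff row_total_0)
  then show ?thesis
    by (auto simp: total_le_iff)
qed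

section \<open>Staircases\<close>

definition chain3_interval :: "nat list \<Rightarrow> nat list \<Rightarrow> nat list \<Rightarrow> bool" where
  "chain3_interval u v S \<longleftrightarrow> young_less u v \<and> young_less v S \<and>
     (\<forall>w. is_partition w \<longrightarrow> young_less u w \<longrightarrow> young_less w S \<longrightarrow> w = v)"

definition chain3_free :: "nat list \<Rightarrow> bool" where
  "chain3_free S \<longleftrightarrow> \<not> (\<exists>u v. is_partition u \<and> is_partition v \<and> chain3_interval u v S)"

lemma chain3_interval_iff_rows:
  assumes "is_partition u" "is_partition v" "is_partition S"
  shows "chain3_interval u v S \<longleftrightarrow> row u < row v \<and> row v < row S \<and>
    (\<forall>h. antimono h \<longrightarrow> row u < h \<longrightarrow> h < row S \<longrightarrow> h = row v)"
proof -
  have "(\<forall>w. is_partition w \<longrightarrow> young_less u w \<longrightarrow> young_less w S \<longrightarrow> w = v) \<longleftrightarrow>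
      (\<forall>h. antimono h \<longrightarrow> row u < h \<longrightarrow> h < row S \<longrightarrow> h = row v)"
  proof
    assume unique: "\<forall>w. is_partition w \<longrightarrow> young_less u w \<longrightarrow> young_less w S \<longrightarrow> w = v"
    show "\<forall>h. antimono h \<longrightarrow> row u < h \<longrightarrow> h < row S \<longrightarrow> h = row v"
    proof (intro allI impI)
      fix h :: "nat \<Rightarrow> nat"
      assume "antimono h" "row u < h" "h < row S"
      then obtain w where "is_partition w" "row w = h"
        using partition_with_rows[of h S] by (blast intro: less_imp_le)
      with unique \<open>row u < h\<close> \<open>h < row S\<close> assms show "h = row v"
        by (simp add: young_less_iff_row_less)
    qed
  next
    assume unique: "\<forall>h. antimono h \<longrightarrow> row u < h \<longrightarrow> h < row S \<longrightarrow> h = row v"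
    show "\<forall>w. is_partition w \<longrightarrow> young_less u w \<longrightarrow> young_less w S \<longrightarrow> w = v"
    proof (intro allI impI)
      fix w
      assume "is_partition w" "young_less u w" "young_less w S"
      with unique assms have "row w = row v"
        by (simp add: antimono_row young_less_iff_row_less)
      with \<open>is_partition w\<close> assms(2) show "w = v"
        by (rule partition_eqI)
    qed
  qed
  with assms show ?thesis
    by (simp add: chain3_interval_def young_less_iff_row_less)
qed

lemma not_chain3_free_if_rows:
  assumes "is_partition S" "antimono f" "antimono h" "f < h" "h < row S"
    and "\<And>h'. antimono h' \<Longrightarrow> f < h' \<Longrightarrow> h' < row S \<Longrightarrow> h' = h"
  shows "\<not> chain3_free S"
proof -
  obtain v where v: "is_partition v" "row v = h"
    using partition_with_rows[OF assms(3) less_imp_le[OF assms(5)]] by blast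
  obtain u where u: "is_partition u" "row u = f"
    using partition_with_rows[OF assms(2) less_imp_le[OF order.strict_trans[OF assms(4,5)]]] by blast
  have "chain3_interval u v S"
    unfolding chain3_interval_iff_rows[OF u(1) v(1) assms(1)] u(2) v(2)
    using assms(4-6) by blast
  with u v show ?thesis
    by (auto simp: chain3_free_def)
qed

definition stair :: "nat \<Rightarrow> nat list" where
  "stair n = map (\<lambda>i. n - i) [0..<n]"

lemma is_partition_stair: "is_partition (stair n)"
  by (auto simp: stair_def is_partition_def sorted_wrt_iff_nth_less)

lemma row_stair: "row (stair n) = (\<lambda>i. n - i)"
  by (auto simp: stair_def row_def)

lemma length_stair: "length (stair n) = n"
  by (simp add: stair_def)

lemma antimono_fun_upd:
  fixes g :: "nat \<Rightarrow> nat"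
  assumes "antimono g" "g (Suc i) \<le> c" "c \<le> g i"
  shows "antimono (g(i := c))"
proof (rule antimonoI)
  fix x y :: nat
  assume "x \<le> y"
  have "g y \<le> c" if "x = i" "y \<noteq> i"
    using antimonoD[OF assms(1), of "Suc i" y] assms(2) that \<open>x \<le> y\<close> by simp
  moreover have "c \<le> g x" if "x \<noteq> i" "y = i"
    using antimonoD[OF assms(1), of x i] assms(3) that \<open>x \<le> y\<close> by simp
  ultimately show "(g(i := c)) y \<le> (g(i := c)) x"
    using antimonoD[OF assms(1) \<open>x \<le> y\<close>] by simp
qed

lemma le_fun_upd_Suc_cases:
  fixes f h :: "'a \<Rightarrow> nat"
  assumes "f \<le> h" "h \<le> f(k := Suc (f k))"
  shows "h = f \<or> h = f(k := Suc (f k))"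
proof -
  have lower: "f x \<le> h x" and upper: "h x \<le> (f(k := Suc (f k))) x" for x
    using assms by (simp_all only: le_funD)
  have "h x = f x" if "x \<noteq> k" for x
    using lower[of x] upper[of x] that by simp
  moreover have "h k = f k \<or> h k = Suc (f k)"
    using lower[of k] upper[of k] by auto
  ultimately show ?thesis
    by (metis fun_upd_apply ext)
qed

lemma antimono_stair_remove_cell: "antimono ((\<lambda>i::nat. n - i)(k := n - Suc k))"
  by (rule antimonoI) (auto simp: le_less)

lemma interval_middle_eq_remove_cell:
  fixes f h g :: "nat \<Rightarrow> nat"
  assumes "f < h" "h < g"
    and unique: "\<And>h'. antimono h' \<Longrightarrow> f < h' \<Longrightarrow> h' < g \<Longrightarrow> h' = h"
    and "antimono (g(k := g k - 1))" "f k < g k"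
  shows "h = g(k := g k - 1)"
proof (rule unique[symmetric])
  show "antimono (g(k := g k - 1))"
    by fact
  show "g(k := g k - 1) < g"
    using \<open>f k < g k\<close> by (auto simp: less_fun_def le_fun_def fun_eq_iff)
  have "f \<le> g"
    using \<open>f < h\<close> \<open>h < g\<close> by simp
  then have "f \<le> g(k := g k - 1)"
    using \<open>f k < g k\<close> by (auto simp: le_fun_def)
  moreover have "f \<noteq> g(k := g k - 1)"
  proof
    assume "f = g(k := g k - 1)"
    then have "g = f(k := Suc (f k))"
      using \<open>f k < g k\<close> by (auto simp: fun_eq_iff)
    then show False
      using le_fun_upd_Suc_cases[of f h k] \<open>f < h\<close> \<open>h < g\<close> by (auto simp: less_le)
  qed
  ultimately show "f < g(k := g k - 1)"
    by (simp add: less_le)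
qed

lemma chain3_free_stair: "chain3_free (stair n)"
proof -
  have "\<not> chain3_interval u v (stair n)" if "is_partition u" "is_partition v" for u v
  proof
    define f h g where "f = row u" and "h = row v" and "g = (\<lambda>i::nat. n - i)"
    assume "chain3_interval u v (stair n)"
    then have "f < h" "h < g"
      and unique: "\<And>h'. antimono h' \<Longrightarrow> f < h' \<Longrightarrow> h' < g \<Longrightarrow> h' = h"
      using that unfolding f_def h_def g_def
      by (simp_all add: chain3_interval_iff_rows is_partition_stair row_stair)
    then have "f \<le> g"
      by simp
    have remove_cell: "h = g(k := g k - 1)" if "f k < g k" for k
      using interval_middle_eq_remove_cell[OF \<open>f < h\<close> \<open>h < g\<close> unique _ that]
        antimono_stair_remove_cell by (simp add: g_def)
    obtain k where k: "f k < g k"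
      using \<open>f < h\<close> \<open>h < g\<close> by (metis le_funD less_le order.strict_trans fun_eq_iff)
    \<comment> \<open>two different removable cells would give two different middle elements\<close>
    have off_k: "f j = g j" if "j \<noteq> k" for j
    proof (rule ccontr)
      assume "f j \<noteq> g j"
      with le_funD[OF \<open>f \<le> g\<close>, of j] have "f j < g j"
        by simp
      then have "g(j := g j - 1) = g(k := g k - 1)"
        using remove_cell[of j] remove_cell[OF k] by simp
      then show False
        using k that by (auto simp: fun_eq_iff dest: spec[of _ k])
    qed
    have "f k < g k - 1"
    proof -
      have "f k \<le> g k - 1"
        using \<open>f < h\<close> remove_cell[OF k] le_funD[of f h k] by simp
      moreover have "f \<noteq> g(k := g k - 1)"
        using \<open>f < h\<close> remove_cell[OF k] by simp
      ultimately show ?thesis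
        using off_k by (auto simp: fun_eq_iff le_less split: if_splits)
    qed
    then have "f k < f (Suc k)"
      using off_k[of "Suc k"] by (simp add: g_def)
    moreover have "antimono f"
      using antimono_row \<open>is_partition u\<close> by (simp add: f_def)
    ultimately show False
      by (simp add: antimono_def not_le[symmetric])
  qed
  then show ?thesis
    by (auto simp: chain3_free_def)
qed

lemma between_horizontal_domino:
  fixes g h :: "'a \<Rightarrow> nat"
  assumes "g(i := g i - 2) < h" "h < g" "2 \<le> g i"
  shows "h = g(i := g i - 1)"
proof -
  have lower: "g(i := g i - 2) \<le> h" "h \<noteq> g(i := g i - 2)" and upper: "h \<le> g" "h \<noteq> g"
    using assms(1,2) by auto
  have off: "h j = g j" if "j \<noteq> i" for j
    using le_funD[OF lower(1), of j] le_funD[OF upper(1), of j] that by simp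
  have "h i \<noteq> g i - 2"
  proof
    assume "h i = g i - 2"
    then have "h = g(i := g i - 2)"
      by (intro ext) (simp add: off)
    with lower(2) show False ..
  qed
  moreover have "h i \<noteq> g i"
  proof
    assume "h i = g i"
    then have "h = g"
      using off by (metis ext)
    with upper(2) show False ..
  qed
  moreover have "g i - 2 \<le> h i" "h i \<le> g i"
    using le_funD[OF lower(1), of i] le_funD[OF upper(1), of i] by simp_all
  ultimately have "h i = g i - 1"
    using \<open>2 \<le> g i\<close> by linarith
  then show "h = g(i := g i - 1)"
    by (intro ext) (simp add: off)
qed

lemma between_vertical_domino:
  fixes g h :: "nat \<Rightarrow> nat"
  assumes "antimono h" "g(Suc i := g (Suc i) - 1, i := g i - 1) < h" "h < g"
    and "0 < g (Suc i)" "g i = g (Suc i)"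
  shows "h = g(Suc i := g (Suc i) - 1)"
proof -
  let ?f = "g(Suc i := g (Suc i) - 1, i := g i - 1)"
  have lower: "?f \<le> h" "h \<noteq> ?f" and upper: "h \<le> g" "h \<noteq> g"
    using assms(2,3) by auto
  have off: "h j = g j" if "j \<noteq> i" "j \<noteq> Suc i" for j
    using le_funD[OF lower(1), of j] le_funD[OF upper(1), of j] that by simp
  have bounds: "g i - 1 \<le> h i" "h i \<le> g i" "g (Suc i) - 1 \<le> h (Suc i)" "h (Suc i) \<le> g (Suc i)"
    using le_funD[OF lower(1), of i] le_funD[OF upper(1), of i]
      le_funD[OF lower(1), of "Suc i"] le_funD[OF upper(1), of "Suc i"]
    by simp_all
  have "h (Suc i) \<le> h i"
    using antimonoD[OF \<open>antimono h\<close>] by simp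
  have top: "h i = g i"
  proof (rule ccontr)
    assume "h i \<noteq> g i"
    with bounds \<open>h (Suc i) \<le> h i\<close> assms(4,5) have "h i = g i - 1" "h (Suc i) = g (Suc i) - 1"
      by simp_all
    then have "h = ?f"
      by (intro ext) (simp add: off)
    with lower(2) show False ..
  qed
  have "h (Suc i) = g (Suc i) - 1"
  proof (rule ccontr)
    assume "h (Suc i) \<noteq> g (Suc i) - 1"
    with bounds have "h (Suc i) = g (Suc i)"
      by simp
    with top have "h = g"
      using off by (metis ext)
    with upper(2) show False ..
  qed
  with top show ?thesis
    using off by (metis ext fun_upd_other fun_upd_same)
qed

lemma not_chain3_free_if_horizontal_domino:
  assumes S: "is_partition S" and domino: "row S (Suc i) + 2 \<le> row S i"
  shows "\<not> chain3_free S"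
proof -
  define g where "g = row S"
  have "antimono g"
    using antimono_row[OF S] by (simp add: g_def)
  show ?thesis
  proof (rule not_chain3_free_if_rows[OF S, of "g(i := g i - 2)" "g(i := g i - 1)"])
    show "antimono (g(i := g i - 2))" "antimono (g(i := g i - 1))"
      using antimono_fun_upd[OF \<open>antimono g\<close>] domino by (simp_all add: g_def)
    show "g(i := g i - 2) < g(i := g i - 1)" "g(i := g i - 1) < row S"
      using domino by (auto simp: g_def less_fun_def le_fun_def dest: spec[of _ i])
    show "h = g(i := g i - 1)" if "g(i := g i - 2) < h" "h < row S" for h
      using between_horizontal_domino[of g i h] that domino by (simp add: g_def)
  qed
qed

lemma not_chain3_free_if_vertical_domino:
  assumes S: "is_partition S"
    and domino: "0 < row S (Suc i)" "row S i = row S (Suc i)" "row S (Suc (Suc i)) < row S (Suc i)"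
  shows "\<not> chain3_free S"
proof -
  define g where "g = row S"
  define h where "h = g(Suc i := g (Suc i) - 1)"
  define f where "f = h(i := g i - 1)"
  have "antimono g"
    using antimono_row[OF S] by (simp add: g_def)
  then have "antimono h"
    unfolding h_def using domino by (intro antimono_fun_upd) (simp_all add: g_def)
  then have "antimono f"
    unfolding f_def using domino by (intro antimono_fun_upd) (simp_all add: g_def h_def)
  show ?thesis
  proof (rule not_chain3_free_if_rows[OF S \<open>antimono f\<close> \<open>antimono h\<close>])
    show "f < h" "h < row S"
      using domino
      by (auto simp: f_def h_def g_def less_fun_def le_fun_def dest: spec[of _ i] spec[of _ "Suc i"])
    show "h' = h" if "antimono h'" "f < h'" "h' < row S" for h'
      using between_vertical_domino[of h' g i] that domino by (simp add: f_def h_def g_def)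
  qed
qed

lemma staircase_if_no_domino:
  fixes g :: "nat \<Rightarrow> nat"
  assumes support: "\<And>i. 0 < g i \<longleftrightarrow> i < L"
    and no_horizontal: "\<And>i. g i \<le> g (Suc i) + 1"
    and no_vertical: "\<And>i. 0 < g (Suc i) \<Longrightarrow> g (Suc (Suc i)) < g (Suc i) \<Longrightarrow> g i \<noteq> g (Suc i)"
    and "antimono g"
  shows "g i = L - i"
proof -
  have "g (L - 1 - k) = k + 1 \<and> g (L - k) = k" if "k < L" for k
    using that
  proof (induction k)
    case 0
    then show ?case
      using support[of L] support[of "L - 1"] no_horizontal[of "L - 1"] by simp
  next
    case (Suc k)
    define j where "j = L - 2 - k"
    have j: "Suc j = L - 1 - k" "Suc (Suc j) = L - k" "j = L - 1 - Suc k"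
      using Suc.prems by (simp_all add: j_def)
    have "g (Suc j) = k + 1"
      using Suc by (simp add: j(1))
    moreover have "g (Suc (Suc j)) = k"
      using Suc by (simp only: j(2))
    moreover have "g (Suc j) \<le> g j"
      using antimonoD[OF \<open>antimono g\<close>] by simp
    ultimately have "g j = k + 2"
      using no_horizontal[of j] no_vertical[of j] by simp
    then show ?case
      using \<open>g (Suc j) = k + 1\<close> j by simp
  qed
  from this[of "L - 1 - i"] show ?thesis
    using support[of i] by (cases "i < L") simp_all
qed

lemma chain3_free_iff_stair:
  assumes S: "is_partition S"
  shows "chain3_free S \<longleftrightarrow> (\<exists>n. S = stair n)"
proof
  assume free: "chain3_free S"
  have "row S i = length S - i" for i
  proof (rule staircase_if_no_domino)
    show "0 < row S i \<longleftrightarrow> i < length S" for i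
      using row_pos_iff[OF S] .
    show "row S i \<le> row S (Suc i) + 1" for i
      using not_chain3_free_if_horizontal_domino[OF S, of i] free by linarith
    show "row S i \<noteq> row S (Suc i)"
      if "0 < row S (Suc i)" "row S (Suc (Suc i)) < row S (Suc i)" for i
      using not_chain3_free_if_vertical_domino[OF S that(1) _ that(2)] free by blast
  qed (rule antimono_row[OF S])
  then have "S = stair (length S)"
    by (intro partition_eqI[OF S is_partition_stair]) (simp add: row_stair fun_eq_iff)
  then show "\<exists>n. S = stair n" ..
qed (auto simp: chain3_free_stair)

definition stair_test :: "nat list \<Rightarrow> nat list \<Rightarrow> nat list \<Rightarrow> nat list \<Rightarrow> nat list \<Rightarrow> nat list \<Rightarrow> bool"
  where "stair_test B S s u v w \<longleftrightarrow> young_le B S \<and> (is_total s \<and> young_le s S \<longrightarrow> young_le s B) \<and>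
     \<not> (young_less u v \<and> young_less v S \<and> (young_less u w \<and> young_less w S \<longrightarrow> w = v))"

lemma all_stair_test_iff:
  assumes "is_partition S"
  shows "(\<forall>s\<in>partitions. \<forall>u\<in>partitions. \<forall>v\<in>partitions. \<exists>w\<in>partitions.
      stair_test (total b) S s u v w) \<longleftrightarrow> S = stair b"
proof -
  have "(\<forall>s\<in>partitions. \<forall>u\<in>partitions. \<forall>v\<in>partitions. \<exists>w\<in>partitions.
      stair_test (total b) S s u v w) \<longleftrightarrow>
    (young_le (total b) S \<and> (\<forall>s\<in>partitions. is_total s \<longrightarrow> young_le s S \<longrightarrow> young_le s (total b)))
      \<and> chain3_free S"
    unfolding stair_test_def chain3_free_def chain3_interval_def
    using is_partition_total by blast
  also have "\<dots> \<longleftrightarrow> row S 0 = b \<and> (\<exists>n. S = stair n)"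
    using first_row_eq_iff chain3_free_iff_stair assms by blast
  also have "\<dots> \<longleftrightarrow> S = stair b"
    by (auto simp: row_stair)
  finally show ?thesis .
qed

section \<open>Rectangles\<close>

definition rect :: "nat \<Rightarrow> nat \<Rightarrow> nat list" where
  "rect p q = replicate q p"

lemma is_partition_rect: "0 < p \<Longrightarrow> is_partition (rect p q)"
  by (simp add: rect_def is_partition_def sorted_wrt_iff_nth_less)

lemma row_rect: "row (rect p q) i = (if i < q then p else 0)"
  by (simp add: rect_def row_def)

lemma le_rect_iff:
  assumes x: "is_partition x"
  shows "young_le x (rect p q) \<longleftrightarrow> row x 0 \<le> p \<and> length x \<le> q"
proof -
  have "row x \<le> row (rect p q) \<longleftrightarrow> row x 0 \<le> p \<and> length x \<le> q"
  proof
    assume le: "row x \<le> row (rect p q)"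
    show "row x 0 \<le> p \<and> length x \<le> q"
    proof
      show "length x \<le> q"
        using le_funD[OF le, of q] row_pos_iff[OF x, of q] by (simp add: row_rect)
      then show "row x 0 \<le> p"
        using le_funD[OF le, of 0] by (cases "q = 0") (simp_all add: row_rect row_eq_0)
    qed
  next
    assume "row x 0 \<le> p \<and> length x \<le> q"
    then show "row x \<le> row (rect p q)"
      using antimonoD[OF antimono_row[OF x], of 0] row_eq_0[of x]
      by (auto simp: le_fun_def row_rect intro: order.trans)
  qed
  then show ?thesis
    by (simp add: young_le_iff_row_le[OF x])
qed

lemma rect_le_stair:
  assumes "0 < p" "0 < q"
  shows "young_le (rect p q) (stair n) \<longleftrightarrow> p + q \<le> n + 1"
proof -
  have "young_le (rect p q) (stair n) \<longleftrightarrow> (\<forall>i. (if i < q then p else 0) \<le> n - i)"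
    by (simp add: young_le_iff_row_le[OF is_partition_rect[OF assms(1)]] le_fun_def row_rect row_stair)
  also have "\<dots> \<longleftrightarrow> p + q \<le> n + 1"
  proof
    assume "\<forall>i. (if i < q then p else 0) \<le> n - i"
    then have "p \<le> n - (q - 1)"
      using assms(2) by (auto dest: spec[of _ "q - 1"])
    then show "p + q \<le> n + 1"
      using assms by linarith
  qed auto
  finally show ?thesis .
qed

definition column :: "nat \<Rightarrow> nat list" where
  "column k = replicate k 1"

lemma is_partition_column: "is_partition (column k)"
  by (simp add: column_def is_partition_def sorted_wrt_iff_nth_less)

lemma column_le_iff: "is_partition x \<Longrightarrow> young_le (column k) x \<longleftrightarrow> k \<le> length x"
  by (auto simp: young_le_def column_def Suc_le_eq nth_pos)

lemma not_total_2_le_iff: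
  assumes t: "is_partition t"
  shows "\<not> young_le (total 2) t \<longleftrightarrow> t = column (length t)"
proof
  assume "\<not> young_le (total 2) t"
  then have le_1: "row t i \<le> 1" for i
    using antimonoD[OF antimono_row[OF t], of 0 i] by (simp add: total_le_iff)
  have "t ! i = 1" if "i < length t" for i
    using nth_pos[OF t that] le_1[of i] that by (simp add: row_def)
  then show "t = column (length t)"
    by (intro nth_equalityI) (simp_all add: column_def)
next
  assume "t = column (length t)"
  then have "row t 0 \<le> 1"
    by (metis column_def row_def nth_replicate le_refl zero_le)
  then show "\<not> young_le (total 2) t"
    by (simp add: total_le_iff)
qed

lemma ball_column:
  "(\<forall>t\<in>partitions. \<not> young_le (total 2) t \<longrightarrow> P t) \<longleftrightarrow> (\<forall>k. P (column k))"
  using not_total_2_le_iff is_partition_column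
  by (metis (mono_tags) length_replicate column_def mem_Collect_eq)

definition bounded_test :: "nat list \<Rightarrow> nat list \<Rightarrow> nat list \<Rightarrow> nat list \<Rightarrow> nat list \<Rightarrow> bool" where
  "bounded_test T A SB x t \<longleftrightarrow> (is_total t \<and> young_le t x \<longrightarrow> young_le t A)
     \<and> (\<not> young_le T t \<and> young_le t x \<longrightarrow> young_le t SB)"

lemma all_bounded_test_iff:
  assumes x: "is_partition x" and "0 < p"
  shows "(\<forall>t\<in>partitions. bounded_test (total 2) (total p) (stair q) x t) \<longleftrightarrow> young_le x (rect p q)"
proof -
  have "(\<forall>t\<in>partitions. is_total t \<longrightarrow> young_le t x \<longrightarrow> young_le t (total p)) \<longleftrightarrow> row x 0 \<le> p"
    by (simp only: ball_is_total) (auto simp: total_le_iff row_total_0)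
  moreover have "(\<forall>t\<in>partitions. \<not> young_le (total 2) t \<longrightarrow> young_le t x \<longrightarrow> young_le t (stair q))
      \<longleftrightarrow> length x \<le> q"
    by (simp only: ball_column)
      (auto simp: column_le_iff[OF x] column_le_iff[OF is_partition_stair] length_stair)
  ultimately show ?thesis
    unfolding bounded_test_def le_rect_iff[OF x] by blast
qed

definition rect_test ::
  "nat list \<Rightarrow> nat list \<Rightarrow> nat list \<Rightarrow> nat list \<Rightarrow> nat list \<Rightarrow> nat list \<Rightarrow> nat list \<Rightarrow> bool" where
  "rect_test T A SB R s x t \<longleftrightarrow> bounded_test T A SB R s \<and> (bounded_test T A SB x t \<longrightarrow> young_le x R)"

lemma all_rect_test_iff:
  assumes R: "is_partition R" and "0 < p"
  shows "(\<forall>s\<in>partitions. \<forall>x\<in>partitions. \<exists>t\<in>partitions.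
      rect_test (total 2) (total p) (stair q) R s x t) \<longleftrightarrow> R = rect p q"
proof -
  let ?bounded = "bounded_test (total 2) (total p) (stair q)"
  have "(\<forall>s\<in>partitions. \<forall>x\<in>partitions. \<exists>t\<in>partitions.
      rect_test (total 2) (total p) (stair q) R s x t) \<longleftrightarrow>
    (\<forall>s\<in>partitions. ?bounded R s) \<and>
    (\<forall>x\<in>partitions. (\<forall>t\<in>partitions. ?bounded x t) \<longrightarrow> young_le x R)"
    unfolding rect_test_def using is_partition_total by blast
  also have "\<dots> \<longleftrightarrow> young_le R (rect p q) \<and>
    (\<forall>x\<in>partitions. young_le x (rect p q) \<longrightarrow> young_le x R)"
    using all_bounded_test_iff[OF R \<open>0 < p\<close>] all_bounded_test_iff[OF _ \<open>0 < p\<close>] by blast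
  also have "\<dots> \<longleftrightarrow> R = rect p q"
    using R is_partition_rect[OF \<open>0 < p\<close>] young_le_antisym young_le_refl by blast
  finally show ?thesis .
qed

section \<open>The defining formula\<close>

definition parameter_tests ::
  "nat list \<Rightarrow> nat list \<Rightarrow> nat list \<Rightarrow> nat list \<Rightarrow> nat list \<Rightarrow> nat list \<Rightarrow> nat list \<Rightarrow>
    nat list \<Rightarrow> nat list \<Rightarrow> nat list \<Rightarrow> nat list \<Rightarrow> bool" where
  "parameter_tests \<rho> \<sigma> \<pi> T A B C SB R D1 D0 \<longleftrightarrow>
     (\<forall>s\<in>partitions. two_test T s \<and> succ_test \<rho> A s \<and> succ_test \<sigma> B s \<and> succ_test \<pi> C s) \<and>
     (\<forall>s\<in>partitions. \<forall>u\<in>partitions. \<forall>v\<in>partitions. \<exists>w\<in>partitions. stair_test B SB s u v w) \<and>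
     (\<forall>s\<in>partitions. \<forall>u\<in>partitions. \<forall>v\<in>partitions. \<exists>w\<in>partitions. stair_test C D1 s u v w) \<and>
     (\<forall>s\<in>partitions. \<forall>u\<in>partitions. \<forall>v\<in>partitions. \<exists>w\<in>partitions. stair_test \<pi> D0 s u v w) \<and>
     (\<forall>s\<in>partitions. \<forall>x\<in>partitions. \<exists>t\<in>partitions. rect_test T A SB R s x t)"

lemma parameter_tests_iff:
  assumes "is_partition T" "is_partition A" "is_partition B" "is_partition C"
    "is_partition SB" "is_partition R" "is_partition D1" "is_partition D0"
  shows "parameter_tests (total a) (total b) (total c) T A B C SB R D1 D0 \<longleftrightarrow>
    T = total 2 \<and> A = total (Suc a) \<and> B = total (Suc b) \<and> C = total (Suc c) \<and>
    SB = stair (Suc b) \<and> R = rect (Suc a) (Suc b) \<and> D1 = stair (Suc c) \<and> D0 = stair c"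
  unfolding parameter_tests_def ball_conj_distrib
  using all_two_test_iff[OF assms(1)] all_succ_test_iff[OF assms(2)] all_succ_test_iff[OF assms(3)]
    all_succ_test_iff[OF assms(4)] all_stair_test_iff[OF assms(5), of "Suc b"]
    all_rect_test_iff[OF assms(6), where p = "Suc a" and q = "Suc b"]
    all_stair_test_iff[OF assms(7), of "Suc c"] all_stair_test_iff[OF assms(8), of c]
  by auto

definition sum_definiens :: "nat list \<Rightarrow> nat list \<Rightarrow> nat list \<Rightarrow> bool" where
  "sum_definiens \<rho> \<sigma> \<pi> \<longleftrightarrow> is_total \<rho> \<and> is_total \<sigma> \<and> is_total \<pi> \<and>
     (\<forall>T\<in>partitions. \<forall>A\<in>partitions. \<forall>B\<in>partitions. \<forall>C\<in>partitions.
      \<forall>SB\<in>partitions. \<forall>R\<in>partitions. \<forall>D1\<in>partitions. \<forall>D0\<in>partitions.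
        parameter_tests \<rho> \<sigma> \<pi> T A B C SB R D1 D0 \<longrightarrow> young_le R D1 \<and> \<not> young_le R D0)"

lemma sum_definiens_iff:
  assumes "is_partition \<rho>" "is_partition \<sigma>" "is_partition \<pi>"
  shows "sum_definiens \<rho> \<sigma> \<pi> \<longleftrightarrow>
    total_part \<rho> \<and> total_part \<sigma> \<and> total_part \<pi> \<and> psize \<rho> + psize \<sigma> = psize \<pi>"
proof (cases "total_part \<rho> \<and> total_part \<sigma> \<and> total_part \<pi>")
  case True
  then obtain a b c where abc: "\<rho> = total a" "\<sigma> = total b" "\<pi> = total c"
    using total_part_iff assms by meson
  then have "sum_definiens \<rho> \<sigma> \<pi> \<longleftrightarrow>
      young_le (rect (Suc a) (Suc b)) (stair (Suc c)) \<and> \<not> young_le (rect (Suc a) (Suc b)) (stair c)"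
    unfolding sum_definiens_def
    using assms True is_partition_total is_partition_stair is_partition_rect
    by (auto simp: parameter_tests_iff is_total_iff_total_part)
  also have "\<dots> \<longleftrightarrow> a + b = c"
    by (simp add: rect_le_stair) linarith
  finally show ?thesis
    using True by (simp add: abc psize_total)
next
  case False
  then show ?thesis
    using assms by (auto simp: sum_definiens_def is_total_iff_total_part)
qed

lemma prenex_tests:
  assumes "D \<noteq> {}"
  shows "(\<exists>s\<in>D. \<exists>u\<in>D. \<exists>v\<in>D. \<exists>x\<in>D. \<forall>w1\<in>D. \<forall>w2\<in>D. \<forall>w3\<in>D. \<forall>t\<in>D.
      K \<and> (P s \<and> E1 s u v w1 \<and> E2 s u v w2 \<and> E3 s u v w3 \<and> F s x t \<longrightarrow> Q)) \<longleftrightarrow>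
    K \<and> ((\<forall>s\<in>D. P s) \<and>
      (\<forall>s\<in>D. \<forall>u\<in>D. \<forall>v\<in>D. \<exists>w\<in>D. E1 s u v w) \<and>
      (\<forall>s\<in>D. \<forall>u\<in>D. \<forall>v\<in>D. \<exists>w\<in>D. E2 s u v w) \<and>
      (\<forall>s\<in>D. \<forall>u\<in>D. \<forall>v\<in>D. \<exists>w\<in>D. E3 s u v w) \<and>
      (\<forall>s\<in>D. \<forall>x\<in>D. \<exists>t\<in>D. F s x t) \<longrightarrow> Q)"
  using assms by blast

definition total_fm :: "nat \<Rightarrow> fm" where
  "total_fm i = Neg (Le C11 (Var i))"

definition less_fm :: "nat \<Rightarrow> nat \<Rightarrow> fm" where
  "less_fm a b = Conj (Le (Var a) (Var b)) (Neg (Eq (Var a) (Var b)))"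

definition imp_fm :: "fm \<Rightarrow> fm \<Rightarrow> fm" where
  "imp_fm f g = Disj (Neg f) g"

definition two_test_fm :: "nat \<Rightarrow> nat \<Rightarrow> fm" where
  "two_test_fm T s = Conj (total_fm T) (Conj (Neg (Le (Var T) C11))
     (imp_fm (Conj (total_fm s) (Neg (Le (Var s) C11))) (Le (Var T) (Var s))))"

definition succ_test_fm :: "nat \<Rightarrow> nat \<Rightarrow> nat \<Rightarrow> fm" where
  "succ_test_fm r A s = Conj (total_fm A) (Conj (less_fm r A)
     (imp_fm (Conj (total_fm s) (less_fm r s)) (Le (Var A) (Var s))))"

definition stair_test_fm :: "nat \<Rightarrow> nat \<Rightarrow> nat \<Rightarrow> nat \<Rightarrow> nat \<Rightarrow> nat \<Rightarrow> fm" where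
  "stair_test_fm B S s u v w = Conj (Le (Var B) (Var S)) (Conj
     (imp_fm (Conj (total_fm s) (Le (Var s) (Var S))) (Le (Var s) (Var B)))
     (Neg (Conj (less_fm u v) (Conj (less_fm v S)
        (imp_fm (Conj (less_fm u w) (less_fm w S)) (Eq (Var w) (Var v)))))))"

definition bounded_test_fm :: "nat \<Rightarrow> nat \<Rightarrow> nat \<Rightarrow> nat \<Rightarrow> nat \<Rightarrow> fm" where
  "bounded_test_fm T A SB x t = Conj
     (imp_fm (Conj (total_fm t) (Le (Var t) (Var x))) (Le (Var t) (Var A)))
     (imp_fm (Conj (Neg (Le (Var T) (Var t))) (Le (Var t) (Var x))) (Le (Var t) (Var SB)))"

definition rect_test_fm :: "nat \<Rightarrow> nat \<Rightarrow> nat \<Rightarrow> nat \<Rightarrow> nat \<Rightarrow> nat \<Rightarrow> nat \<Rightarrow> fm" where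
  "rect_test_fm T A SB R s x t = Conj (bounded_test_fm T A SB R s)
     (imp_fm (bounded_test_fm T A SB x t) (Le (Var x) (Var R)))"

lemma sat_total_fm: "sat e (total_fm i) \<longleftrightarrow> is_total (e i)"
  by (simp add: total_fm_def is_total_def)

lemma sat_imp_fm: "sat e (imp_fm f g) \<longleftrightarrow> (sat e f \<longrightarrow> sat e g)"
  by (simp add: imp_fm_def)

lemmas test_fm_defs = total_fm_def less_fm_def imp_fm_def two_test_fm_def succ_test_fm_def
  stair_test_fm_def bounded_test_fm_def rect_test_fm_def

lemma sat_test_fms:
  "sat e (two_test_fm T s) \<longleftrightarrow> two_test (e T) (e s)"
  "sat e (succ_test_fm r A s) \<longleftrightarrow> succ_test (e r) (e A) (e s)"
  "sat e (stair_test_fm B S s u v w) \<longleftrightarrow> stair_test (e B) (e S) (e s) (e u) (e v) (e w)"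
  "sat e (rect_test_fm T A SB R s x t) \<longleftrightarrow> rect_test (e T) (e A) (e SB) (e R) (e s) (e x) (e t)"
  by (auto simp: test_fm_defs two_test_def succ_test_def stair_test_def rect_test_def
      bounded_test_def is_total_def young_less_def)

lemma qfree_test_fms:
  "qfree (two_test_fm T s)" "qfree (succ_test_fm r A s)" "qfree (stair_test_fm B S s u v w)"
  "qfree (rect_test_fm T A SB R s x t)"
  by (simp_all add: test_fm_defs)

text \<open>
  Variables \<open>0, 1, 2\<close> stand for \<open>\<rho>, \<sigma>, \<pi>\<close>; \<open>3\<close>--\<open>10\<close> for the parameters
  \<open>T A B C SB R D1 D0\<close> of \<open>parameter_tests\<close>; \<open>11\<close>--\<open>14\<close> for the witnesses \<open>s u v x\<close>
  refuting a wrong choice of parameters, and \<open>15\<close>--\<open>18\<close> for the universally quantified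
  \<open>wB w1 w0 t\<close> of the three staircase tests and the rectangle test.
\<close>

definition sum_matrix_fm :: fm where
  "sum_matrix_fm = Conj (total_fm 0) (Conj (total_fm 1) (Conj (total_fm 2) (imp_fm
     (Conj (two_test_fm 3 11) (Conj (succ_test_fm 0 4 11) (Conj (succ_test_fm 1 5 11)
      (Conj (succ_test_fm 2 6 11) (Conj (stair_test_fm 5 7 11 12 13 15)
      (Conj (stair_test_fm 6 9 11 12 13 16) (Conj (stair_test_fm 2 10 11 12 13 17)
      (rect_test_fm 3 4 7 8 11 14 18))))))))
     (Conj (Le (Var 8) (Var 9)) (Neg (Le (Var 8) (Var 10)))))))"

definition sum_fm :: fm where
  "sum_fm = Alls [3, 4, 5, 6, 7, 8, 9, 10] (Exs [11, 12, 13, 14] (Alls [15, 16, 17, 18] sum_matrix_fm))"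

lemma pi_fm_sum_fm: "pi_fm 3 sum_fm"
proof -
  have "qfree sum_matrix_fm"
    by (simp add: sum_matrix_fm_def total_fm_def imp_fm_def qfree_test_fms)
  then have "pi_fm (Suc 0) (Alls [15, 16, 17, 18] sum_matrix_fm)"
    by (intro piS sigma0)
  then have "sigma_fm (Suc (Suc 0)) (Exs [11, 12, 13, 14] (Alls [15, 16, 17, 18] sum_matrix_fm))"
    by (rule sigmaS)
  then have "pi_fm (Suc (Suc (Suc 0))) sum_fm"
    unfolding sum_fm_def by (rule piS)
  then show ?thesis
    by (simp add: numeral_3_eq_3)
qed

lemma sat_sum_fm: "sat e sum_fm \<longleftrightarrow> sum_definiens (e 0) (e 1) (e 2)"
proof -
  let ?\<rho> = "e 0" and ?\<sigma> = "e 1" and ?\<pi> = "e 2"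
  have "sat e sum_fm \<longleftrightarrow>
    (\<forall>T\<in>partitions. \<forall>A\<in>partitions. \<forall>B\<in>partitions. \<forall>C\<in>partitions.
     \<forall>SB\<in>partitions. \<forall>R\<in>partitions. \<forall>D1\<in>partitions. \<forall>D0\<in>partitions.
     \<exists>s\<in>partitions. \<exists>u\<in>partitions. \<exists>v\<in>partitions. \<exists>x\<in>partitions.
     \<forall>wB\<in>partitions. \<forall>w1\<in>partitions. \<forall>w0\<in>partitions. \<forall>t\<in>partitions.
       (is_total ?\<rho> \<and> is_total ?\<sigma> \<and> is_total ?\<pi>) \<and>
       ((two_test T s \<and> succ_test ?\<rho> A s \<and> succ_test ?\<sigma> B s \<and> succ_test ?\<pi> C s) \<and>
        stair_test B SB s u v wB \<and> stair_test C D1 s u v w1 \<and> stair_test ?\<pi> D0 s u v w0 \<and>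
        rect_test T A SB R s x t \<longrightarrow> young_le R D1 \<and> \<not> young_le R D0))"
    by (simp add: sum_fm_def sum_matrix_fm_def Alls_def Exs_def sat_test_fms sat_total_fm
        sat_imp_fm)
  also have "\<dots> \<longleftrightarrow> sum_definiens ?\<rho> ?\<sigma> ?\<pi>"
  proof -
    have "partitions \<noteq> {}"
      using is_partition_total by blast
    then show ?thesis
      unfolding prenex_tests[OF \<open>partitions \<noteq> {}\<close>] sum_definiens_def parameter_tests_def
      using is_partition_total by blast
  qed
  finally show ?thesis .
qed

theorem proposition3p10:
  shows "pi_definable3 3 (\<lambda>\<rho> \<sigma> \<pi>. total_part \<rho> \<and> total_part \<sigma> \<and> total_part \<pi> \<and> psize \<rho> + psize \<sigma> = psize \<pi>)"
  unfolding pi_definable3_def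
proof (intro exI conjI allI impI)
  show "pi_fm 3 sum_fm"
    by (rule pi_fm_sum_fm)
next
  fix e :: "nat \<Rightarrow> nat list"
  assume "\<forall>i. is_partition (e i)"
  then show "sat e sum_fm \<longleftrightarrow> total_part (e 0) \<and> total_part (e 1) \<and> total_part (e 2) \<and>
      psize (e 0) + psize (e 1) = psize (e 2)"
    by (simp add: sat_sum_fm sum_definiens_iff)
qed

end
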